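(* Let $U$ and $V$ be real vector spaces with $\dim(U)=\dim(V)=2$, and let $B\colon U\times U\rightarrow V$ be a symmetric bilinear map with associated quadratic map $Q_B\colon U\rightarrow V$, $Q_B(u)=B(u,u)$. Then $Q_B$ is surjective if and only if $B$ is indefinite.
   Context: For a symmetric bilinear map $B\colon U\times U\rightarrow V$ between real vector spaces, and for each $\lambda\in V^*$, let $\lambda Q_B$ denote the real-valued quadratic form on $U$ given by $\lambda Q_B(u)=\lambda\cdot Q_B(u)$. The map $B$ is called indefinite if for each nonzero $\lambda\in V^*$, the quadratic form $\lambda Q_B$ is neither positive-semidefinite nor negative-semidefinite. *)

theory Defs
  imports "HOL-Analysis.Analysis"
begin

definition sym_bilinear :: "('u::real_vector \<Rightarrow> 'u \<Rightarrow> 'v::real_vector) \<Rightarrow> bool" where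
  "sym_bilinear B \<longleftrightarrow> bilinear B \<and> (\<forall>x y. B x y = B y x)"

definition quad_map :: "('u \<Rightarrow> 'u \<Rightarrow> 'v) \<Rightarrow> 'u \<Rightarrow> 'v" where
  "quad_map B u = B u u"

definition indefinite :: "('u::real_vector \<Rightarrow> 'u \<Rightarrow> 'v::real_vector) \<Rightarrow> bool" where
  "indefinite B \<longleftrightarrow>
     (\<forall>l::'v \<Rightarrow> real. linear l \<and> l \<noteq> (\<lambda>_. 0) \<longrightarrow>
        \<not> (\<forall>u. l (quad_map B u) \<ge> 0) \<and> \<not> (\<forall>u. l (quad_map B u) \<le> 0))"

end

theory Submission
  imports Defs "HOL-Library.Quadratic_Discriminant"
begin

text \<open>If \<open>Q\<^sub>B\<close> is onto, then for a functional \<open>\<lambda>\<close> with \<open>\<lambda> v \<noteq> 0\<close> both \<open>v\<close> and \<open>-v\<close> are values,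
  so \<open>\<lambda> Q\<^sub>B\<close> takes both signs. Conversely, let \<open>w \<noteq> 0\<close> and let \<open>\<kappa>\<close> be a functional with kernel
  \<open>\<real>w\<close>. The indefinite real form \<open>\<kappa> Q\<^sub>B\<close> on the plane \<open>U\<close> has a hyperbolic basis \<open>v\<^sub>1, v\<^sub>2\<close>, so
  \<open>Q\<^sub>B(v\<^sub>i) = c\<^sub>i w\<close> and \<open>\<kappa> B(v\<^sub>1, v\<^sub>2) \<noteq> 0\<close>. A functional \<open>\<phi>\<close> with \<open>\<phi> w = 1\<close> and \<open>\<phi> B(v\<^sub>1, v\<^sub>2) = 0\<close>
  satisfies \<open>\<phi> Q\<^sub>B(x v\<^sub>1 + y v\<^sub>2) = x\<^sup>2 c\<^sub>1 + y\<^sup>2 c\<^sub>2\<close>; by indefiniteness some \<open>c\<^sub>i\<close> is positive,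
  and \<open>w = Q\<^sub>B(v\<^sub>i / \<surd>c\<^sub>i)\<close>.\<close>

lemma independent_card_le_dim_UNIV:
  fixes S :: "'a::real_vector set"
  assumes "dim (UNIV :: 'a set) = n" and "n \<noteq> 0" and "independent S"
  shows "card S \<le> n"
  \<comment> \<open>\<open>n \<noteq> 0\<close> excludes the junk value \<open>dim UNIV = 0\<close> of infinite-dimensional spaces.\<close>
proof -
  obtain Bs :: "'a set" where "independent Bs" "UNIV \<subseteq> span Bs" "card Bs = n"
    using basis_exists[of "UNIV :: 'a set"] unfolding assms(1) .
  moreover from \<open>card Bs = n\<close> \<open>n \<noteq> 0\<close> have "finite Bs"
    by (intro card_ge_0_finite) simp
  ultimately show ?thesis
    using independent_span_bound[of Bs S] assms(3) by blast
qed

lemma dim2_span_pair: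
  fixes a b :: "'a::real_vector"
  assumes dim2: "dim (UNIV :: 'a set) = 2" and indep: "independent {a, b}" and "a \<noteq> b"
  obtains x y where "u = x *\<^sub>R a + y *\<^sub>R b"
proof -
  have "u \<in> span {a, b}"
  proof (rule ccontr)
    assume u: "u \<notin> span {a, b}"
    then have "u \<notin> {a, b}"
      using span_base by blast
    then have "card (insert u {a, b}) = 3"
      using \<open>a \<noteq> b\<close> by simp
    moreover have "card (insert u {a, b}) \<le> 2"
      using independent_card_le_dim_UNIV[OF dim2] independent_insertI[OF u indep] by simp
    ultimately show False
      by simp
  qed
  then obtain x where "u - x *\<^sub>R a \<in> span {b}"
    using span_breakdown_eq[of u a "{b}"] by auto
  then obtain y where "u - x *\<^sub>R a = y *\<^sub>R b"
    by (auto simp: span_singleton)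
  then show thesis
    using that[of x y] by (simp add: algebra_simps)
qed

lemma dim2_dual_basis:
  fixes w :: "'a::real_vector"
  assumes dim2: "dim (UNIV :: 'a set) = 2" and "w \<noteq> 0"
  obtains z and f g :: "'a \<Rightarrow> real"
  where "linear f" "linear g" "f w = 1" "g w = 0" "g z = 1"
    and "\<And>v. v = f v *\<^sub>R w + g v *\<^sub>R z"
proof -
  have "\<not> UNIV \<subseteq> span {w}"
    using real_vector.dim_le_card[of UNIV "{w}"] dim2 by auto
  then obtain z where z: "z \<notin> span {w}"
    by blast
  then have wz: "w \<noteq> z"
    using span_base by blast
  have indep: "independent {w, z}"
    using independent_insertI[OF z] \<open>w \<noteq> 0\<close> by (simp add: insert_commute)
  obtain f :: "'a \<Rightarrow> real" where f: "linear f" "f w = 1" "f z = 0"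
    using linear_independent_extend[OF indep, of "\<lambda>x. if x = w then 1 else 0"] wz by auto
  obtain g :: "'a \<Rightarrow> real" where g: "linear g" "g w = 0" "g z = 1"
    using linear_independent_extend[OF indep, of "\<lambda>x. if x = w then 0 else 1"] wz by auto
  have dec: "v = f v *\<^sub>R w + g v *\<^sub>R z" for v
  proof -
    obtain x y where v: "v = x *\<^sub>R w + y *\<^sub>R z"
      using dim2_span_pair[OF dim2 indep wz] .
    then have "f v = x" "g v = y"
      using f g by (simp_all add: linear_add linear_scale)
    with v show ?thesis
      by simp
  qed
  show thesis
    using that[OF f(1) g(1) f(2) g(2) g(3) dec] .
qed

lemma span_pair_shear:
  fixes a b :: "'a::real_vector"
  assumes span: "\<And>u. \<exists>x y. u = x *\<^sub>R a + y *\<^sub>R b" and "s \<noteq> t"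
  shows "\<exists>x y. u = x *\<^sub>R (a + s *\<^sub>R b) + y *\<^sub>R (a + t *\<^sub>R b)"
proof -
  obtain p r where u: "u = p *\<^sub>R a + r *\<^sub>R b"
    using span by blast
  define k where "k = (r - p * s) / (t - s)"
  have "p * s + k * (t - s) = r"
    using \<open>s \<noteq> t\<close> by (simp add: k_def)
  then have "(p - k) *\<^sub>R (a + s *\<^sub>R b) + k *\<^sub>R (a + t *\<^sub>R b) = u"
    unfolding u by (simp add: algebra_simps flip: scaleR_add_left)
  then show ?thesis
    by metis
qed

lemma quad_map_zero: "bilinear B \<Longrightarrow> quad_map B 0 = 0"
  by (simp add: quad_map_def bilinear_lzero)

lemma quad_map_scaleR: "bilinear B \<Longrightarrow> quad_map B (c *\<^sub>R u) = c\<^sup>2 *\<^sub>R quad_map B u"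
  by (simp add: quad_map_def bilinear_lmul bilinear_rmul power2_eq_square)

lemma quad_map_lincomb:
  assumes "sym_bilinear B"
  shows "quad_map B (x *\<^sub>R a + y *\<^sub>R b)
    = x\<^sup>2 *\<^sub>R quad_map B a + (2 * x * y) *\<^sub>R B a b + y\<^sup>2 *\<^sub>R quad_map B b"
proof -
  have bl: "bilinear B" and sym: "B b a = B a b"
    using assms by (auto simp: sym_bilinear_def)
  have "B (x *\<^sub>R a + y *\<^sub>R b) (x *\<^sub>R a + y *\<^sub>R b)
      = (x * x) *\<^sub>R B a a + (x * y) *\<^sub>R B a b + (x * y) *\<^sub>R B a b + (y * y) *\<^sub>R B b b"
    by (simp add: bilinear_ladd[OF bl] bilinear_radd[OF bl] bilinear_lmul[OF bl]
        bilinear_rmul[OF bl] sym algebra_simps)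
  then show ?thesis
    by (simp add: quad_map_def power2_eq_square flip: scaleR_add_left mult_2 mult.assoc)
qed

lemma sym_bilinear_compose_linear:
  assumes "sym_bilinear B" and "linear l"
  shows "sym_bilinear (\<lambda>x y. l (B x y))"
  using assms linear_compose[of "B _" l] linear_compose[of "\<lambda>x. B x _" l]
  by (auto simp: sym_bilinear_def bilinear_def o_def)

lemma surj_quad_map_imp_indefinite:
  fixes B :: "'u::real_vector \<Rightarrow> 'u \<Rightarrow> 'v::real_vector"
  assumes "surj (quad_map B)"
  shows "indefinite B"
  unfolding indefinite_def
proof (intro allI impI)
  fix l :: "'v \<Rightarrow> real"
  assume "linear l \<and> l \<noteq> (\<lambda>_. 0)"
  then obtain v where "linear l" "l v \<noteq> 0"
    by auto
  moreover obtain u1 u2 where "quad_map B u1 = v" "quad_map B u2 = - v"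
    using assms by (metis surjD)
  ultimately have "l (quad_map B u2) = - l (quad_map B u1)" "l (quad_map B u1) \<noteq> 0"
    by (simp_all add: linear_neg)
  then show "\<not> (\<forall>u. l (quad_map B u) \<ge> 0) \<and> \<not> (\<forall>u. l (quad_map B u) \<le> 0)"
    by (metis neg_0_le_iff_le neg_le_0_iff_le order.antisym)
qed

lemma opposite_signs_independent:
  fixes q :: "'a::real_vector \<Rightarrow> 'a \<Rightarrow> real"
  assumes "bilinear q" and "quad_map q u1 > 0" and "quad_map q u2 < 0"
  shows "independent {u1, u2}" and "u1 \<noteq> u2"
proof -
  have "u2 \<notin> span {u1}"
  proof
    assume "u2 \<in> span {u1}"
    then obtain k where "u2 = k *\<^sub>R u1"
      by (auto simp: span_singleton)
    then have "quad_map q u2 = k\<^sup>2 * quad_map q u1"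
      using quad_map_scaleR[OF assms(1)] by simp
    with assms(2,3) show False
      by (metis zero_le_power2 zero_le_mult_iff not_le less_imp_le)
  qed
  moreover have "u1 \<noteq> 0"
    using assms(2) quad_map_zero[OF assms(1)] by auto
  ultimately show "independent {u1, u2}" and "u1 \<noteq> u2"
    using independent_insertI[of u2 "{u1}"] span_base[of u1 "{u1}"]
    by (auto simp: insert_commute)
qed

lemma indefinite_form_hyperbolic_basis:
  fixes q :: "'a::real_vector \<Rightarrow> 'a \<Rightarrow> real"
  assumes dim2: "dim (UNIV :: 'a set) = 2" and q: "sym_bilinear q"
    and pos: "quad_map q u1 > 0" and neg: "quad_map q u2 < 0"
  obtains v1 v2 where "quad_map q v1 = 0" and "quad_map q v2 = 0" and "q v1 v2 \<noteq> 0"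
    and "\<And>u. \<exists>x y. u = x *\<^sub>R v1 + y *\<^sub>R v2"
proof -
  have bl: "bilinear q"
    using q by (simp add: sym_bilinear_def)
  have span: "\<exists>x y. u = x *\<^sub>R u1 + y *\<^sub>R u2" for u
    using dim2_span_pair[OF dim2 opposite_signs_independent[OF bl pos neg]] by metis
  let ?a = "quad_map q u2" and ?b = "2 * q u1 u2" and ?c = "quad_map q u1"
  have "discrim ?a ?b ?c > 0"
    using mult_neg_pos[OF neg pos] by (simp add: discrim_def) (meson less_le_trans zero_le_power2)
  then obtain s t where "s \<noteq> t" and roots: "?a * s\<^sup>2 + ?b * s + ?c = 0" "?a * t\<^sup>2 + ?b * t + ?c = 0"
    using discriminant_pos_ex neg by (metis less_irrefl)
  have along_line: "quad_map q (u1 + r *\<^sub>R u2) = ?a * r\<^sup>2 + ?b * r + ?c" for r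
    using quad_map_lincomb[OF q, of 1 u1 r u2] by (simp add: algebra_simps)
  define v1 where "v1 = u1 + s *\<^sub>R u2"
  define v2 where "v2 = u1 + t *\<^sub>R u2"
  have span_v: "\<exists>x y. u = x *\<^sub>R v1 + y *\<^sub>R v2" for u
    unfolding v1_def v2_def using span_pair_shear[OF span \<open>s \<noteq> t\<close>] .
  have iso: "quad_map q v1 = 0" "quad_map q v2 = 0"
    using along_line roots by (simp_all add: v1_def v2_def)
  obtain x y where "u1 = x *\<^sub>R v1 + y *\<^sub>R v2"
    using span_v by blast
  then have "quad_map q u1 = 2 * x * y * q v1 v2"
    using quad_map_lincomb[OF q, of x v1 y v2] iso by simp
  with pos have "q v1 v2 \<noteq> 0"
    by auto
  with iso span_v show thesis
    using that by blast
qed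

lemma separating_functional:
  fixes \<mu> \<kappa> :: "'a::real_vector \<Rightarrow> real"
  assumes "linear \<mu>" "linear \<kappa>" "\<mu> w = 1" "\<kappa> w = 0" "\<kappa> e \<noteq> 0"
  obtains \<phi> :: "'a \<Rightarrow> real"
  where "linear \<phi>" "\<phi> w = 1" "\<phi> e = 0" "\<And>v. \<kappa> v = 0 \<Longrightarrow> \<phi> v = \<mu> v"
proof
  show "linear (\<lambda>v. \<mu> v - \<mu> e / \<kappa> e * \<kappa> v)"
    by (rule linearI) (simp_all add: assms(1,2) linear_add linear_scale algebra_simps add_divide_distrib)
qed (use assms in auto)

lemma indefinite_positive_on_spanning_pair:
  fixes B :: "'u::real_vector \<Rightarrow> 'u \<Rightarrow> 'v::real_vector" and \<phi> :: "'v \<Rightarrow> real"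
  assumes ind: "indefinite B" and B: "sym_bilinear B"
    and span: "\<And>u. \<exists>x y. u = x *\<^sub>R v1 + y *\<^sub>R v2"
    and \<phi>: "linear \<phi>" "\<phi> \<noteq> (\<lambda>_. 0)" and "\<phi> (B v1 v2) = 0"
  shows "\<phi> (quad_map B v1) > 0 \<or> \<phi> (quad_map B v2) > 0"
proof (rule ccontr)
  assume "\<not> ?thesis"
  then have v1: "\<phi> (quad_map B v1) \<le> 0" and v2: "\<phi> (quad_map B v2) \<le> 0"
    by auto
  have "\<phi> (quad_map B u) \<le> 0" for u
  proof -
    obtain x y where "u = x *\<^sub>R v1 + y *\<^sub>R v2"
      using span by blast
    then have "\<phi> (quad_map B u) = x\<^sup>2 * \<phi> (quad_map B v1) + y\<^sup>2 * \<phi> (quad_map B v2)"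
      using quad_map_lincomb[OF B] \<open>\<phi> (B v1 v2) = 0\<close> by (simp add: linear_add[OF \<phi>(1)] linear_scale[OF \<phi>(1)])
    also have "\<dots> \<le> 0"
      using v1 v2 by (simp add: add_nonpos_nonpos mult_nonneg_nonpos)
    finally show ?thesis .
  qed
  with ind \<phi> show False
    unfolding indefinite_def by blast
qed

lemma quad_map_scaled_in_range:
  assumes "bilinear B" and "k > 0" and "quad_map B v = k *\<^sub>R w"
  shows "w \<in> range (quad_map B)"
proof -
  have "quad_map B ((1 / sqrt k) *\<^sub>R v) = w"
    using assms by (simp add: quad_map_scaleR power_divide)
  then show ?thesis
    by (metis rangeI)
qed

lemma indefinite_imp_surj_quad_map:
  fixes B :: "'u::real_vector \<Rightarrow> 'u \<Rightarrow> 'v::real_vector"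
  assumes dimU: "dim (UNIV :: 'u set) = 2" and dimV: "dim (UNIV :: 'v set) = 2"
    and B: "sym_bilinear B" and ind: "indefinite B"
  shows "surj (quad_map B)"
proof -
  have bl: "bilinear B"
    using B by (simp add: sym_bilinear_def)
  have "w \<in> range (quad_map B)" for w
  proof (cases "w = 0")
    case True
    then show ?thesis
      using quad_map_zero[OF bl] by (metis rangeI)
  next
    case False
    obtain z and \<mu> \<kappa> :: "'v \<Rightarrow> real" where lin: "linear \<mu>" "linear \<kappa>"
      and "\<mu> w = 1" "\<kappa> w = 0" "\<kappa> z = 1" and dec: "\<And>v. v = \<mu> v *\<^sub>R w + \<kappa> v *\<^sub>R z"
      using dim2_dual_basis[OF dimV False] by metis
    have "\<kappa> \<noteq> (\<lambda>_. 0)"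
      using \<open>\<kappa> z = 1\<close> by force
    then obtain u1 u2 where "\<kappa> (quad_map B u1) > 0" "\<kappa> (quad_map B u2) < 0"
      using ind lin(2) unfolding indefinite_def by (meson not_le)
    then obtain v1 v2 where iso: "\<kappa> (quad_map B v1) = 0" "\<kappa> (quad_map B v2) = 0"
      and "\<kappa> (B v1 v2) \<noteq> 0" and span: "\<And>u. \<exists>x y. u = x *\<^sub>R v1 + y *\<^sub>R v2"
      using indefinite_form_hyperbolic_basis[OF dimU sym_bilinear_compose_linear[OF B lin(2)]]
      unfolding quad_map_def by metis
    have on_line: "quad_map B v = \<mu> (quad_map B v) *\<^sub>R w" if "\<kappa> (quad_map B v) = 0" for v
      using dec[of "quad_map B v"] that by simp
    obtain \<phi> :: "'v \<Rightarrow> real" where "linear \<phi>" "\<phi> w = 1" "\<phi> (B v1 v2) = 0"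
      and \<phi>_eq: "\<And>v. \<kappa> v = 0 \<Longrightarrow> \<phi> v = \<mu> v"
      using separating_functional[OF lin \<open>\<mu> w = 1\<close> \<open>\<kappa> w = 0\<close> \<open>\<kappa> (B v1 v2) \<noteq> 0\<close>] by blast
    moreover from \<open>\<phi> w = 1\<close> have "\<phi> \<noteq> (\<lambda>_. 0)"
      by force
    ultimately have "\<phi> (quad_map B v1) > 0 \<or> \<phi> (quad_map B v2) > 0"
      using indefinite_positive_on_spanning_pair[OF ind B span] by blast
    then show ?thesis
      using quad_map_scaled_in_range[OF bl] on_line iso \<phi>_eq by metis
  qed
  then show ?thesis
    by blast
qed

theorem proposition1p3:
  fixes B :: "'u::real_vector \<Rightarrow> 'u \<Rightarrow> 'v::real_vector"
  assumes "dim (UNIV :: 'u set) = 2"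
    and "dim (UNIV :: 'v set) = 2"
    and "sym_bilinear B"
  shows "surj (quad_map B) \<longleftrightarrow> indefinite B"
  using surj_quad_map_imp_indefinite indefinite_imp_surj_quad_map[OF assms] by blast

end
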